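(* If $t$ is a canonical term of $\Phi$ and $t\rightarrow u$ in $\Phi$, then $\langle\!\langle t\rangle\!\rangle\rightarrow_v\langle\!\langle u\rangle\!\rangle$.
   Context: $\lambda$-terms: $M::=x\mid\lambda x.M\mid MN$, variables from a set $\Upsilon$ with a fixed total order, $FV(M)$ the ordered sequence of free variables. Values $V::=x\mid\lambda x.M$; weak call-by-value reduction $\rightarrow_v$: $(\lambda x.M)V\rightarrow_v M\{V/x\}$ for values $V$, closed under $ML$ and $LM$ contexts (no reduction under $\lambda$). $\Phi$: binary function symbol $\mathbf{app}$, constructors $c_{x,M}$ ($M$ a $\lambda$-term, $x\in\Upsilon$) of arity the length of $FV(\lambda x.M)$; $[\![x]\!]=x$, $[\![\lambda x.M]\!]=c_{x,M}(x_1,\dots,x_n)$ with $FV(\lambda x.M)=x_1,\dots,x_n$, $[\![MN]\!]=\mathbf{app}([\![M]\!],[\![N]\!])$; rules $\mathbf{app}(c_{x,M}(x_1,\dots,x_n),x)\rightarrow[\![M]\!]$; rewriting is call-by-value (a step replaces anywhere a subterm $l\sigma$ by $r\sigma$, $\sigma$ mapping variables to constructor terms, i.e. closed terms built only from constructors). $\langle\!\langle x\rangle\!\rangle=x$, $\langle\!\langle\mathbf{app}(u,v)\rangle\!\rangle=\langle\!\langle u\rangle\!\rangle\langle\!\langle v\rangle\!\rangle$, $\langle\!\langle c_{x,M}(t_1,\dots,t_n)\rangle\!\rangle=(\lambda x.M)\{\langle\!\langle t_1\rangle\!\rangle/x_1,\dots,\langle\!\langle t_n\rangle\!\rangle/x_n\}$.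 A closed term $t$ is canonical if it is a constructor term or $t=\mathbf{app}(u,v)$ with $u,v$ canonical. *)

theory Defs
  imports Main "HOL-Library.Infinite_Typeclass"
begin

datatype 'v lterm = Var 'v | Lam 'v "'v lterm" | App "'v lterm" "'v lterm"

primrec fv :: "'v lterm \<Rightarrow> 'v set" where
  "fv (Var x) = {x}"
| "fv (Lam x M) = fv M - {x}"
| "fv (App M N) = fv M \<union> fv N"

definition FVs :: "('v::linorder) lterm \<Rightarrow> 'v list" where
  "FVs M = sorted_list_of_set (fv M)"

primrec ssubst :: "('v::infinite \<Rightarrow> 'v lterm) \<Rightarrow> 'v lterm \<Rightarrow> 'v lterm" where
  "ssubst \<sigma> (Var x) = \<sigma> x"
| "ssubst \<sigma> (App M N) = App (ssubst \<sigma> M) (ssubst \<sigma> N)"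
| "ssubst \<sigma> (Lam y M) =
     (let S = (\<Union>w \<in> fv (Lam y M). fv (\<sigma> w));
          z = (if y \<in> S then (SOME z. z \<notin> S) else y)
      in Lam z (ssubst (\<sigma>(y := Var z)) M))"

definition subst1 :: "('v::infinite) lterm \<Rightarrow> 'v \<Rightarrow> 'v lterm \<Rightarrow> 'v lterm" where
  "subst1 M x N = ssubst (Var(x := N)) M"

fun is_value :: "'v lterm \<Rightarrow> bool" where
  "is_value (Var _) = True"
| "is_value (Lam _ _) = True"
| "is_value (App _ _) = False"

inductive vstep :: "('v::infinite) lterm \<Rightarrow> 'v lterm \<Rightarrow> bool" where
  beta: "is_value V \<Longrightarrow> vstep (App (Lam x M) V) (subst1 M x V)"
| appL: "vstep M M' \<Longrightarrow> vstep (App M L) (App M' L)"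
| appR: "vstep M M' \<Longrightarrow> vstep (App L M) (App L M')"

text \<open>Terms of Phi: variables, the binary symbol app, and constructors c_{x,M}.\<close>
datatype 'v trm = TVar 'v | TApp "'v trm" "'v trm" | Con 'v "'v lterm" "'v trm list"

fun constr_term :: "('v::linorder) trm \<Rightarrow> bool" where
  "constr_term (TVar _) = False"
| "constr_term (TApp _ _) = False"
| "constr_term (Con x M ts) =
     (length ts = length (FVs (Lam x M)) \<and> (\<forall>t \<in> set ts. constr_term t))"

fun canonical :: "('v::linorder) trm \<Rightarrow> bool" where
  "canonical (TVar _) = False"
| "canonical (TApp u v) = (canonical u \<and> canonical v)"
| "canonical (Con x M ts) = constr_term (Con x M ts)"

fun tr :: "('v::linorder) lterm \<Rightarrow> 'v trm" where
  "tr (Var x) = TVar x"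
| "tr (Lam x M) = Con x M (map TVar (FVs (Lam x M)))"
| "tr (App M N) = TApp (tr M) (tr N)"

primrec tsubst :: "('v \<Rightarrow> 'v trm) \<Rightarrow> 'v trm \<Rightarrow> 'v trm" where
  "tsubst \<sigma> (TVar x) = \<sigma> x"
| "tsubst \<sigma> (TApp u v) = TApp (tsubst \<sigma> u) (tsubst \<sigma> v)"
| "tsubst \<sigma> (Con x M ts) = Con x M (map (tsubst \<sigma>) ts)"

text \<open>Call-by-value rewriting in Phi with the rules
  app(c_{x,M}(x1,...,xn), x) -> [[M]]; substitutions map variables to
  constructor terms; steps may occur anywhere.\<close>
inductive rstep :: "('v::linorder) trm \<Rightarrow> 'v trm \<Rightarrow> bool" where
  root: "(\<forall>w \<in> insert x (set (FVs (Lam x M))). constr_term (\<sigma> w)) \<Longrightarrow>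
         rstep (TApp (tsubst \<sigma> (Con x M (map TVar (FVs (Lam x M))))) (\<sigma> x))
               (tsubst \<sigma> (tr M))"
| appL: "rstep u u' \<Longrightarrow> rstep (TApp u v) (TApp u' v)"
| appR: "rstep v v' \<Longrightarrow> rstep (TApp u v) (TApp u v')"
| con: "i < length ts \<Longrightarrow> rstep (ts ! i) t' \<Longrightarrow> rstep (Con x M ts) (Con x M (ts[i := t']))"

fun untr :: "('v::{linorder,infinite}) trm \<Rightarrow> 'v lterm" where
  "untr (TVar x) = Var x"
| "untr (TApp u v) = App (untr u) (untr v)"
| "untr (Con x M ts) =
     ssubst (\<lambda>w. case map_of (zip (FVs (Lam x M)) (map untr ts)) w of
                   None \<Rightarrow> Var w | Some N \<Rightarrow> N) (Lam x M)"

end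

theory Submission
  imports Defs
begin

text \<open>Constructor terms are in normal form and back-translate to closed abstractions, which
are values. Hence a step inside a canonical term happens at an \<open>app\<close> node, where it is
mirrored by a congruence step, or it is a root step
\<open>app(c\<^sub>x\<^sub>,\<^sub>M(\<sigma> x\<^sub>1,\<dots>,\<sigma> x\<^sub>n), \<sigma> x) \<rightarrow> [[M]]\<sigma>\<close>, whose back-translation is a
\<open>\<beta>\<^sub>v\<close>-step: both sides are \<open>M\<close> with the closed terms \<open>\<langle>\<langle>\<sigma> w\<rangle>\<rangle>\<close> substituted for its free
variables. Since everything substituted is closed, capture-avoiding substitution never renames
and can be replaced by plain substitution.\<close>

primrec nsubst :: "('v \<Rightarrow> 'v lterm) \<Rightarrow> 'v lterm \<Rightarrow> 'v lterm" where
  "nsubst \<sigma> (Var x) = \<sigma> x"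
| "nsubst \<sigma> (App M N) = App (nsubst \<sigma> M) (nsubst \<sigma> N)"
| "nsubst \<sigma> (Lam y M) = Lam y (nsubst (\<sigma>(y := Var y)) M)"

lemma finite_fv: "finite (fv M)"
  by (induction M) auto

lemma set_FVs: "set (FVs M) = fv M"
  by (simp add: FVs_def finite_fv)

lemma ssubst_eq_nsubst:
  "\<forall>w\<in>fv M. fv (\<sigma> w) \<subseteq> {w} \<Longrightarrow> ssubst \<sigma> M = nsubst \<sigma> M"
proof (induction M arbitrary: \<sigma>)
  case (Lam y M)
  have "y \<notin> (\<Union>w \<in> fv (Lam y M). fv (\<sigma> w))"
    using Lam.prems by auto
  moreover have "ssubst (\<sigma>(y := Var y)) M = nsubst (\<sigma>(y := Var y)) M"
    using Lam.prems by (intro Lam.IH) auto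
  ultimately show ?case by (simp add: Let_def)
qed simp_all

lemma nsubst_cong: "\<forall>w\<in>fv M. \<sigma> w = \<sigma>' w \<Longrightarrow> nsubst \<sigma> M = nsubst \<sigma>' M"
proof (induction M arbitrary: \<sigma> \<sigma>')
  case (Lam y M)
  have "nsubst (\<sigma>(y := Var y)) M = nsubst (\<sigma>'(y := Var y)) M"
    using Lam.prems by (intro Lam.IH) auto
  then show ?case by simp
qed auto

lemma fv_nsubst: "fv (nsubst \<sigma> M) \<subseteq> (\<Union>w\<in>fv M. fv (\<sigma> w))"
proof (induction M arbitrary: \<sigma>)
  case (Lam y M)
  have "fv (nsubst (\<sigma>(y := Var y)) M) \<subseteq> (\<Union>w\<in>fv M. fv ((\<sigma>(y := Var y)) w))"
    by (rule Lam.IH)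
  then show ?case by (auto split: if_splits)
qed fastforce+

lemma nsubst_Var: "nsubst Var M = M"
proof (induction M)
  case (Lam y M)
  have "Var(y := Var y) = Var" by auto
  then show ?case using Lam by simp
qed auto

lemma nsubst_closed: "fv M = {} \<Longrightarrow> nsubst \<sigma> M = M"
  using nsubst_cong[of M \<sigma> Var] nsubst_Var by auto

lemma nsubst_nsubst:
  "\<forall>w\<in>fv M. fv (\<sigma>1 w) \<subseteq> {w} \<Longrightarrow>
   nsubst \<sigma>2 (nsubst \<sigma>1 M) = nsubst (\<lambda>w. nsubst \<sigma>2 (\<sigma>1 w)) M"
proof (induction M arbitrary: \<sigma>1 \<sigma>2)
  case (Lam y N)
  have "nsubst (\<sigma>2(y := Var y)) (nsubst (\<sigma>1(y := Var y)) N)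
      = nsubst (\<lambda>w. nsubst (\<sigma>2(y := Var y)) ((\<sigma>1(y := Var y)) w)) N"
    using Lam.prems by (intro Lam.IH) auto
  also have "\<dots> = nsubst ((\<lambda>w. nsubst \<sigma>2 (\<sigma>1 w))(y := Var y)) N"
  proof (rule nsubst_cong, intro ballI)
    fix w assume w: "w \<in> fv N"
    show "nsubst (\<sigma>2(y := Var y)) ((\<sigma>1(y := Var y)) w)
        = ((\<lambda>w. nsubst \<sigma>2 (\<sigma>1 w))(y := Var y)) w"
    proof (cases "w = y")
      case False
      then have "fv (\<sigma>1 w) \<subseteq> {w}" using Lam.prems w by auto
      then have "nsubst (\<sigma>2(y := Var y)) (\<sigma>1 w) = nsubst \<sigma>2 (\<sigma>1 w)"
        using False by (intro nsubst_cong) auto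
      then show ?thesis using False by simp
    qed simp
  qed
  finally show ?case by simp
qed simp_all

lemma subst1_closed: "fv N = {} \<Longrightarrow> subst1 M x N = nsubst (Var(x := N)) M"
  unfolding subst1_def by (intro ssubst_eq_nsubst) auto

definition env :: "'v list \<Rightarrow> 'v lterm list \<Rightarrow> 'v \<Rightarrow> 'v lterm" where
  "env xs Ns w = (case map_of (zip xs Ns) w of None \<Rightarrow> Var w | Some N \<Rightarrow> N)"

lemma env_map: "env xs (map f xs) w = (if w \<in> set xs then f w else Var w)"
  by (simp add: env_def map_of_zip_map)

lemma env_in_set: "w \<in> set xs \<Longrightarrow> length xs = length Ns \<Longrightarrow> env xs Ns w \<in> set Ns"
  by (auto simp: env_def map_of_zip_is_None dest: map_of_SomeD set_zip_rightD split: option.split)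

lemma env_notin: "w \<notin> set xs \<Longrightarrow> env xs Ns w = Var w"
  by (auto simp: env_def split: option.split dest: map_of_SomeD set_zip_leftD)

lemma fv_env:
  assumes "length xs = length Ns" and "\<forall>N\<in>set Ns. fv N = {}"
  shows "fv (env xs Ns w) \<subseteq> {w}"
  using assms env_in_set[of w xs Ns] env_notin[of w xs Ns] by (cases "w \<in> set xs") auto

lemma untr_Con: "untr (Con x M ts) = ssubst (env (FVs (Lam x M)) (map untr ts)) (Lam x M)"
  by (simp add: env_def [abs_def])

lemma untr_constr_closed: "constr_term t \<Longrightarrow> fv (untr t) = {}"
proof (induction t rule: untr.induct)
  case (3 x M ts)
  let ?\<rho> = "env (FVs (Lam x M)) (map untr ts)"
  have len: "length (FVs (Lam x M)) = length (map untr ts)"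
    and closed: "\<forall>N\<in>set (map untr ts). fv N = {}"
    using "3" by auto
  have "untr (Con x M ts) = nsubst ?\<rho> (Lam x M)"
    unfolding untr_Con using fv_env[OF len closed] by (intro ssubst_eq_nsubst) auto
  moreover have "fv (?\<rho> w) = {}" if "w \<in> fv (Lam x M)" for w
    using that env_in_set[OF _ len] closed by (fastforce simp: set_FVs)
  ultimately show ?case using fv_nsubst[of ?\<rho> "Lam x M"] by auto
qed simp_all

lemma constr_value: "constr_term t \<Longrightarrow> is_value (untr t)"
  by (cases t) (auto simp: Let_def)

lemma constr_term_no_rstep: "rstep t u \<Longrightarrow> \<not> constr_term t"
  by (induction rule: rstep.induct) auto

lemma untr_tsubst_Con:
  assumes "\<forall>w\<in>fv (Lam x M). constr_term (\<sigma> w)"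
  shows "untr (tsubst \<sigma> (Con x M (map TVar (FVs (Lam x M)))))
       = nsubst (\<lambda>w. untr (\<sigma> w)) (Lam x M)"
proof -
  let ?\<rho> = "\<lambda>w. if w \<in> fv (Lam x M) then untr (\<sigma> w) else Var w"
  have "env (FVs (Lam x M)) (map (\<lambda>w. untr (\<sigma> w)) (FVs (Lam x M))) = ?\<rho>"
    by (rule ext) (simp only: env_map set_FVs)
  then have "untr (tsubst \<sigma> (Con x M (map TVar (FVs (Lam x M))))) = ssubst ?\<rho> (Lam x M)"
    by (simp only: tsubst.simps map_map comp_def untr_Con)
  also have "\<dots> = nsubst ?\<rho> (Lam x M)"
    using assms untr_constr_closed by (intro ssubst_eq_nsubst) auto
  also have "\<dots> = nsubst (\<lambda>w. untr (\<sigma> w)) (Lam x M)"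
    by (rule nsubst_cong) simp
  finally show ?thesis .
qed

lemma untr_tsubst_tr:
  "\<forall>w\<in>fv M. constr_term (\<sigma> w) \<Longrightarrow> untr (tsubst \<sigma> (tr M)) = nsubst (\<lambda>w. untr (\<sigma> w)) M"
proof (induction M)
  case (Lam x M)
  then show ?case by (simp only: tr.simps untr_tsubst_Con)
qed simp_all

lemma vstep_untr_root:
  assumes constr: "\<forall>w \<in> insert x (set (FVs (Lam x M))). constr_term (\<sigma> w)"
  shows "vstep (untr (TApp (tsubst \<sigma> (Con x M (map TVar (FVs (Lam x M))))) (\<sigma> x)))
               (untr (tsubst \<sigma> (tr M)))"
proof -
  let ?\<tau> = "\<lambda>w. untr (\<sigma> w)"
  let ?M' = "nsubst (?\<tau>(x := Var x)) M"
  have closed: "fv (?\<tau> w) = {}" if "w \<in> insert x (fv (Lam x M))" for w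
    using that constr untr_constr_closed by (auto simp: set_FVs)
  have "\<forall>w\<in>fv (Lam x M). constr_term (\<sigma> w)"
    using constr by (simp add: set_FVs)
  then have redex: "untr (TApp (tsubst \<sigma> (Con x M (map TVar (FVs (Lam x M))))) (\<sigma> x))
      = App (Lam x ?M') (?\<tau> x)"
    by (simp only: untr.simps(2) untr_tsubst_Con nsubst.simps)
  have "subst1 ?M' x (?\<tau> x) = nsubst (Var(x := ?\<tau> x)) ?M'"
    using closed by (intro subst1_closed) auto
  also have "\<dots> = nsubst (\<lambda>w. nsubst (Var(x := ?\<tau> x)) ((?\<tau>(x := Var x)) w)) M"
    using closed by (intro nsubst_nsubst) auto
  also have "\<dots> = nsubst ?\<tau> M"
    using closed by (intro nsubst_cong) (auto simp: nsubst_closed)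
  also have "\<dots> = untr (tsubst \<sigma> (tr M))"
    using constr by (intro untr_tsubst_tr[symmetric]) (auto simp: set_FVs)
  finally have contractum: "subst1 ?M' x (?\<tau> x) = untr (tsubst \<sigma> (tr M))" .
  have "vstep (App (Lam x ?M') (?\<tau> x)) (subst1 ?M' x (?\<tau> x))"
    using constr constr_value by (intro vstep.beta) auto
  then show ?thesis
    unfolding redex contractum .
qed

theorem lemma6:
  fixes t u :: "('v::{linorder,infinite}) trm"
  assumes "canonical t" and "rstep t u"
  shows "vstep (untr t) (untr u)"
  using assms(2,1)
proof (induction rule: rstep.induct)
  case (root x M \<sigma>)
  show ?case by (rule vstep_untr_root[OF root.hyps])
next
  case (appL u u' v)
  then show ?case by (simp add: vstep.appL)
next
  case (appR v v' u)
  then show ?case by (simp add: vstep.appR)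
next
  case (con i ts t' x M)
  then have "rstep (Con x M ts) (Con x M (ts[i := t']))" by (intro rstep.con)
  with con.prems show ?case using constr_term_no_rstep by force
qed

end
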